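(* Let $0\le\lambda<1$ and $0\le\beta\le2\lambda$. Then $C_\beta[f]\in\mathcal{S}^*$ for every $f\in\mathcal{S}^*(\lambda)$.
   Context: $\mathbb{D}$ is the open unit disk; $\mathcal{A}$ the class of analytic $f$ on $\mathbb{D}$ with $f(0)=0$, $f'(0)=1$. For $\lambda<1$, $\mathcal{S}^*(\lambda)=\{f\in\mathcal{A}: f(z)\ne0 \text{ for } z\ne0,\ \mathrm{Re}\,(zf'(z)/f(z))>\lambda \text{ on }\mathbb{D}\}$, and $\mathcal{S}^*=\mathcal{S}^*(0)$ is the class of normalized starlike univalent functions. For $\beta\ge0$ and $f$ analytic on $\mathbb{D}$ with $f(0)=0$, $C_\beta[f](z)=\int_0^z \frac{f(w)}{w(1-w)^\beta}\,dw$ (principal branch of $(1-w)^\beta$). *)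

theory Defs
  imports "HOL-Complex_Analysis.Complex_Analysis"
begin

definition classA :: "(complex \<Rightarrow> complex) set" where
  "classA = {f. f holomorphic_on ball 0 1 \<and> f 0 = 0 \<and> deriv f 0 = 1}"

definition starlike_order :: "real \<Rightarrow> (complex \<Rightarrow> complex) set" where
  "starlike_order lam = {f \<in> classA.
      (\<forall>z\<in>ball 0 1. z \<noteq> 0 \<longrightarrow> f z \<noteq> 0) \<and>
      (\<forall>z\<in>ball 0 1. z \<noteq> 0 \<longrightarrow> Re (z * deriv f z / f z) > lam)}"

definition starlike_class :: "(complex \<Rightarrow> complex) set" where
  "starlike_class = starlike_order 0"

text \<open>The integrand f(w) / (w (1-w)^beta), with the principal branch
  (1-w) powr beta = exp(beta Ln(1-w)); at w = 0 it is given its removable value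
  deriv f 0.\<close>
definition C_integrand :: "real \<Rightarrow> (complex \<Rightarrow> complex) \<Rightarrow> complex \<Rightarrow> complex" where
  "C_integrand \<beta> f w = (if w = 0 then deriv f 0 else f w / (w * (1 - w) powr (complex_of_real \<beta>)))"

definition C_op :: "real \<Rightarrow> (complex \<Rightarrow> complex) \<Rightarrow> complex \<Rightarrow> complex" where
  "C_op \<beta> f z = contour_integral (linepath 0 z) (C_integrand \<beta> f)"

end

theory Submission
  imports Defs
begin

text \<open>Let F = C_\<beta>[f], so that z F'(z) = f(z) / (1 - z)^\<beta>, and let q = F / (z F'), with q(0) = 1.
  Logarithmic differentiation of F = q z F' gives the differential equation
  q(z) P(z) + z q'(z) = 1 with P(z) = z f'(z) / f(z) + \<beta> z / (1 - z), and
  Re P > \<lambda> - \<beta>/2 \<ge> 0 because Re (z / (1 - z)) > -1/2 on the disk.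
  If Re q were not positive throughout the disk, take a point z0 of least modulus where
  Re q \<le> 0. There Re q(z0) = 0, and since Re q attains its minimum over the closed disk of
  radius |z0| at z0, the radial and tangential derivatives show that z0 q'(z0) is real
  and \<le> 0. Then q(z0) P(z0) = 1 - z0 q'(z0) \<ge> 1 is real although q(z0) is purely
  imaginary and Re P(z0) > 0, a contradiction. Hence Re (z F'/F) = Re (1/q) > 0.\<close>

lemma has_real_derivative_Re_of_real:
  fixes g :: "complex \<Rightarrow> complex"
  assumes "(g has_field_derivative D) (at (of_real x))"
  shows "((\<lambda>t. Re (g (of_real t))) has_real_derivative Re D) (at x)"
  using bounded_linear.has_vector_derivative[OF bounded_linear_Re has_vector_derivative_real_field[OF assms]]
  by (simp add: has_real_derivative_iff_has_vector_derivative)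

lemma Re_min_at_boundary_deriv:
  fixes q :: "complex \<Rightarrow> complex"
  assumes deriv: "(q has_field_derivative D) (at z0)"
    and min: "\<And>z. norm z \<le> norm z0 \<Longrightarrow> Re (q z0) \<le> Re (q z)"
  shows "Im (z0 * D) = 0" and "Re (z0 * D) \<le> 0"
proof -
  have tangential:
    "((\<lambda>t. Re (q (exp (\<i> * of_real t) * z0))) has_real_derivative Re (D * (\<i> * z0))) (at 0)"
  proof -
    have "((\<lambda>t. q (exp (\<i> * t) * z0)) has_field_derivative D * (\<i> * z0)) (at (of_real 0))"
      using deriv by (auto intro!: derivative_eq_intros DERIV_chain2[of q])
    then show ?thesis by (rule has_real_derivative_Re_of_real)
  qed
  moreover have "Re (q (exp (\<i> * of_real 0) * z0)) \<le> Re (q (exp (\<i> * of_real t) * z0))" for t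
    by (simp add: min norm_mult)
  ultimately have "Re (D * (\<i> * z0)) = 0"
    by (intro DERIV_local_min[of _ _ _ 1]) auto
  then show "Im (z0 * D) = 0" by (simp add: mult.commute)
  have radial: "((\<lambda>t. Re (q (of_real t * z0))) has_real_derivative Re (D * z0)) (at 1)"
  proof -
    have "((\<lambda>t. q (t * z0)) has_field_derivative D * z0) (at (of_real 1))"
      using deriv by (auto intro!: derivative_eq_intros DERIV_chain2[of q])
    then show ?thesis by (rule has_real_derivative_Re_of_real)
  qed
  show "Re (z0 * D) \<le> 0"
  proof (rule ccontr)
    assume "\<not> Re (z0 * D) \<le> 0"
    then obtain d where "d > 0" and dec: "\<And>h. h > 0 \<Longrightarrow> h < d \<Longrightarrow>
        Re (q (of_real (1 - h) * z0)) < Re (q (of_real 1 * z0))"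
      using DERIV_pos_inc_left[OF radial] by (force simp: mult.commute)
    define h where "h = min (d/2) 1"
    have "0 < h" "h < d" "h \<le> 1" using \<open>d > 0\<close> by (auto simp: h_def)
    then have "norm (of_real (1 - h) * z0) \<le> norm z0"
      by (simp add: norm_mult mult_left_le_one_le del: of_real_diff)
    with dec[OF \<open>0 < h\<close> \<open>h < d\<close>] min show False by force
  qed
qed

lemma obtain_min_modulus_Re_zero:
  fixes q :: "complex \<Rightarrow> complex"
  assumes hol: "q holomorphic_on ball 0 r" and q0: "Re (q 0) > 0"
    and z1: "z1 \<in> ball 0 r" "Re (q z1) \<le> 0"
  obtains z0 where "z0 \<in> ball 0 r" "z0 \<noteq> 0" "Re (q z0) = 0"
    "Im (z0 * deriv q z0) = 0" "Re (z0 * deriv q z0) \<le> 0"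
proof -
  define S where "S = cball 0 (norm z1) \<inter> {z. Re (q z) \<le> 0}"
  have sub: "cball 0 (norm z1) \<subseteq> ball 0 r" using z1 by auto
  have cont: "continuous_on (cball 0 (norm z1)) (\<lambda>z. Re (q z))"
    using holomorphic_on_imp_continuous_on[OF holomorphic_on_subset[OF hol sub]]
    by (intro continuous_intros)
  have "closed S"
    unfolding S_def using continuous_closed_preimage[OF cont, of "{..0}"]
    by (auto simp: vimage_def Int_def)
  then have "compact S"
    by (simp add: S_def compact_eq_bounded_closed bounded_Int)
  moreover have "z1 \<in> S" using z1 by (simp add: S_def)
  ultimately obtain z0 where "z0 \<in> S" and z0_min: "\<And>y. y \<in> S \<Longrightarrow> norm z0 \<le> norm y"
    using continuous_attains_inf[of S norm] continuous_on_norm_id by blast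
  then have z0: "z0 \<in> ball 0 r" "Re (q z0) \<le> 0" and "norm z0 \<le> norm z1"
    using subsetD[OF sub, of z0] by (auto simp: S_def)
  have "z0 \<noteq> 0" using z0 q0 by auto
  have Re_pos: "Re (q z) > 0" if "z \<in> ball 0 (norm z0)" for z
    using z0_min[of z] that \<open>norm z0 \<le> norm z1\<close> by (force simp: S_def)
  have Re_nonneg: "Re (q z) \<ge> 0" if "norm z \<le> norm z0" for z
  proof (rule continuous_ge_on_closure[where S = "ball 0 (norm z0)" and f = "\<lambda>z. Re (q z)"])
    have "cball 0 (norm z0) \<subseteq> cball 0 (norm z1)" using \<open>norm z0 \<le> norm z1\<close> by auto
    then show "continuous_on (closure (ball 0 (norm z0))) (\<lambda>z. Re (q z))"
      using \<open>z0 \<noteq> 0\<close> by (intro continuous_on_subset[OF cont]) auto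
    show "z \<in> closure (ball 0 (norm z0))"
      using \<open>z0 \<noteq> 0\<close> that by auto
  qed (use Re_pos in force)
  have Re_z0: "Re (q z0) = 0" using z0 Re_nonneg[of z0] by simp
  have deriv: "(q has_field_derivative deriv q z0) (at z0)"
    using holomorphic_derivI[OF hol _ z0(1)] by simp
  have min: "Re (q z0) \<le> Re (q z)" if "norm z \<le> norm z0" for z
    using Re_nonneg[OF that] Re_z0 by simp
  show ?thesis
    using that[OF z0(1) \<open>z0 \<noteq> 0\<close> Re_z0] Re_min_at_boundary_deriv[OF deriv min] by blast
qed

lemma Re_pos_if_differential_equation:
  fixes q P :: "complex \<Rightarrow> complex"
  assumes hol: "q holomorphic_on ball 0 r" and q0: "Re (q 0) > 0"
    and eq: "\<And>z. z \<in> ball 0 r \<Longrightarrow> z \<noteq> 0 \<Longrightarrow> q z * P z + z * deriv q z = 1"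
    and P: "\<And>z. z \<in> ball 0 r \<Longrightarrow> z \<noteq> 0 \<Longrightarrow> Re (P z) > 0"
    and z: "z \<in> ball 0 r"
  shows "Re (q z) > 0"
proof (rule ccontr)
  assume "\<not> Re (q z) > 0"
  then obtain z0 where z0: "z0 \<in> ball 0 r" "z0 \<noteq> 0" "Re (q z0) = 0"
    and real: "Im (z0 * deriv q z0) = 0" and nonpos: "Re (z0 * deriv q z0) \<le> 0"
    using obtain_min_modulus_Re_zero[OF hol q0 z] by force
  define a where "a = Re (z0 * deriv q z0)"
  have "q z0 * P z0 = of_real (1 - a)"
    using eq[OF z0(1,2)] real by (simp add: a_def complex_eq_iff)
  then have "Im (q z0) * Re (P z0) = 0" and "Re (q z0 * P z0) = 1 - a"
    using z0(3) by (simp_all add: complex_eq_iff)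
  then have "q z0 = 0"
    using P[OF z0(1,2)] z0(3) by (simp add: complex_eq_iff)
  with \<open>Re (q z0 * P z0) = 1 - a\<close> nonpos show False by (simp add: a_def)
qed

lemma Re_div_one_minus_gt:
  fixes z :: complex
  assumes "norm z < 1"
  shows "Re (z / (1 - z)) > -1/2"
proof -
  define a b where "a = Re z" and "b = Im z"
  define X Y where "X = (1 - a)\<^sup>2 + b\<^sup>2" and "Y = a * (1 - a) - b\<^sup>2"
  have "(norm z)\<^sup>2 < 1" using assms by (simp add: abs_square_less_1)
  then have n: "a\<^sup>2 + b\<^sup>2 < 1" by (simp add: cmod_power2 a_def b_def)
  then have "a\<^sup>2 < 1" using zero_le_power2[of b] by linarith
  then have "\<bar>a\<bar> < 1" by (simp add: abs_square_less_1)
  then have "X > 0" by (simp add: X_def add_pos_nonneg)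
  have "2 * Y + X = 1 - (a\<^sup>2 + b\<^sup>2)"
    by (simp add: X_def Y_def algebra_simps power2_eq_square)
  then have "-1/2 < Y / X"
    unfolding pos_less_divide_eq[OF \<open>X > 0\<close>] using n by linarith
  moreover have "Re (z / (1 - z)) = Y / X"
    by (simp add: Re_divide a_def b_def X_def Y_def power2_eq_square algebra_simps)
  ultimately show ?thesis by simp
qed

lemma Re_plus_of_real_mult_div_one_minus_pos:
  fixes w z :: complex
  assumes "Re w > lam" "0 \<le> \<beta>" "\<beta> \<le> 2 * lam" "norm z < 1"
  shows "Re (w + of_real \<beta> * (z / (1 - z))) > 0"
proof -
  have "\<beta> * Re (z / (1 - z)) \<ge> \<beta> * (-1/2)"
    using Re_div_one_minus_gt[OF assms(4)] assms(2) by (intro mult_left_mono) auto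
  moreover have "Re (of_real \<beta> * (z / (1 - z))) = \<beta> * Re (z / (1 - z))"
    by (simp only: times_complex.sel) simp
  ultimately show ?thesis
    using assms(1,3) unfolding plus_complex.sel by linarith
qed

lemma powr_one_minus_has_field_derivative:
  fixes w :: complex and \<beta> :: real
  assumes "norm w < 1"
  shows "((\<lambda>w. (1 - w) powr of_real \<beta>) has_field_derivative
           - of_real \<beta> * (1 - w) powr of_real \<beta> / (1 - w)) (at w)"
proof -
  have "Re (1 - w) > 0" using assms complex_Re_le_cmod[of w] by simp
  then have "1 - w \<notin> \<real>\<^sub>\<le>\<^sub>0"
    by (auto simp: nonpos_Reals_def elim!: Reals_cases dest!: arg_cong[where f=Re])
  moreover have "((\<lambda>w. 1 - w) has_field_derivative -1) (at w)"
    by (auto intro!: derivative_eq_intros)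
  ultimately have "((\<lambda>w. (1 - w) powr of_real \<beta>) has_field_derivative
          of_real \<beta> * (1 - w) powr (of_real \<beta> - 1) * -1) (at w)"
    using DERIV_chain2[OF has_field_derivative_powr] by blast
  moreover have "1 - w \<noteq> 0" using assms by auto
  ultimately show ?thesis by (simp add: powr_diff)
qed

lemma contour_integral_linepath_has_field_derivative:
  fixes f :: "complex \<Rightarrow> complex"
  assumes "f holomorphic_on S" "convex S" "open S" "a \<in> S" "x \<in> S"
  shows "((\<lambda>z. contour_integral (linepath a z) f) has_field_derivative f x) (at x)"
proof -
  have "contour_integral (linepath a b) f + contour_integral (linepath b c) f +
          contour_integral (linepath c a) f = 0" if "b \<in> S" "c \<in> S" for b c
  proof (rule has_chain_integral_chain_integral3)
    have "path_image (linepath a b +++ linepath b c +++ linepath c a) \<subseteq> S"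
      using assms(2,4) that by (simp add: path_image_join closed_segment_subset)
    then show "(f has_contour_integral 0) (linepath a b +++ linepath b c +++ linepath c a)"
      using assms(1,2) by (simp add: Cauchy_theorem_convex_simple)
  qed
  then have "((\<lambda>z. contour_integral (linepath a z) f) has_field_derivative f x) (at x within S)"
    using assms holomorphic_on_imp_continuous_on by (blast intro: triangle_contour_integrals_convex_primitive)
  then show ?thesis
    by (simp add: at_within_open[OF assms(5,3)])
qed

lemma holomorphic_on_div_mult_id:
  fixes F g :: "complex \<Rightarrow> complex"
  assumes "F holomorphic_on S" "open S" "0 \<in> S" "F 0 = 0"
    and "g holomorphic_on S" "\<And>z. z \<in> S \<Longrightarrow> g z \<noteq> 0"
  shows "(\<lambda>z. if z = 0 then deriv F 0 / g 0 else F z / (z * g z)) holomorphic_on S"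
proof -
  have "(\<lambda>z. if z = 0 then deriv F 0 else (F z - F 0) / (z - 0)) holomorphic_on S"
    using assms(1-3) by (intro pole_lemma) (auto simp: interior_open)
  then have "(\<lambda>z. (if z = 0 then deriv F 0 else (F z - F 0) / (z - 0)) / g z) holomorphic_on S"
    using assms(5,6) by (intro holomorphic_on_divide)
  then show ?thesis
    by (rule holomorphic_transform) (simp add: assms(4))
qed

lemma powr_one_minus_holomorphic: "(\<lambda>w. (1 - w) powr of_real \<beta>) holomorphic_on ball 0 1"
  using powr_one_minus_has_field_derivative by (fastforce simp: holomorphic_on_open)

lemma C_integrand_holomorphic:
  assumes "f holomorphic_on ball 0 1" "f 0 = 0"
  shows "C_integrand \<beta> f holomorphic_on ball 0 1"
proof -
  have "(\<lambda>w. if w = 0 then deriv f 0 / (1 - 0) powr of_real \<beta>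
          else f w / (w * (1 - w) powr of_real \<beta>)) holomorphic_on ball 0 1"
    using assms powr_one_minus_holomorphic by (intro holomorphic_on_div_mult_id) auto
  then show ?thesis
    by (rule holomorphic_transform) (simp add: C_integrand_def)
qed

lemma C_op_has_field_derivative:
  assumes "f holomorphic_on ball 0 1" "f 0 = 0" "z \<in> ball 0 1"
  shows "(C_op \<beta> f has_field_derivative C_integrand \<beta> f z) (at z)"
  unfolding C_op_def[abs_def]
  using assms
  by (intro contour_integral_linepath_has_field_derivative[where S = "ball 0 1"] C_integrand_holomorphic) auto

lemma deriv_C_op:
  assumes "f holomorphic_on ball 0 1" "f 0 = 0" "z \<in> ball 0 1"
  shows "deriv (C_op \<beta> f) z = C_integrand \<beta> f z"
  using assms by (intro DERIV_imp_deriv C_op_has_field_derivative)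

lemma C_integrand_nonzero:
  assumes "f \<in> classA" "\<And>w. w \<in> ball 0 1 \<Longrightarrow> w \<noteq> 0 \<Longrightarrow> f w \<noteq> 0" "z \<in> ball 0 1"
  shows "C_integrand \<beta> f z \<noteq> 0"
  using assms by (auto simp: C_integrand_def classA_def)

lemma C_op_classA:
  assumes "f \<in> classA"
  shows "C_op \<beta> f \<in> classA"
proof -
  have f: "f holomorphic_on ball 0 1" "f 0 = 0" "deriv f 0 = 1"
    using assms by (auto simp: classA_def)
  then have "C_op \<beta> f holomorphic_on ball 0 1"
    using C_op_has_field_derivative by (fastforce simp: holomorphic_on_open)
  moreover have "deriv (C_op \<beta> f) 0 = 1"
    using deriv_C_op[OF f(1,2)] f(3) by (simp add: C_integrand_def)
  ultimately show ?thesis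
    by (simp add: classA_def C_op_def)
qed

text \<open>q = F / (z F') for F = C_\<beta>[f] (whose derivative is the integrand), with its
  removable value 1 at 0.\<close>
definition C_quotient :: "real \<Rightarrow> (complex \<Rightarrow> complex) \<Rightarrow> complex \<Rightarrow> complex" where
  "C_quotient \<beta> f z = (if z = 0 then 1 else C_op \<beta> f z / (z * C_integrand \<beta> f z))"

lemma C_quotient_holomorphic:
  assumes "f \<in> classA" "\<And>w. w \<in> ball 0 1 \<Longrightarrow> w \<noteq> 0 \<Longrightarrow> f w \<noteq> 0"
  shows "C_quotient \<beta> f holomorphic_on ball 0 1"
proof -
  have f: "f holomorphic_on ball 0 1" "f 0 = 0" "deriv f 0 = 1"
    using assms(1) by (auto simp: classA_def)
  have value_0: "deriv (C_op \<beta> f) 0 / C_integrand \<beta> f 0 = 1"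
    using deriv_C_op[OF f(1,2)] f(3) by (simp add: C_integrand_def)
  have "(\<lambda>z. if z = 0 then deriv (C_op \<beta> f) 0 / C_integrand \<beta> f 0
                     else C_op \<beta> f z / (z * C_integrand \<beta> f z)) holomorphic_on ball 0 1"
    using C_op_classA[OF assms(1)] C_integrand_holomorphic[OF f(1,2)] C_integrand_nonzero[OF assms]
    by (intro holomorphic_on_div_mult_id) (auto simp: classA_def)
  then show ?thesis
    by (simp only: value_0 C_quotient_def[abs_def])
qed

lemma C_quotient_differential_equation:
  assumes f: "f \<in> classA" and nz: "\<And>w. w \<in> ball 0 1 \<Longrightarrow> w \<noteq> 0 \<Longrightarrow> f w \<noteq> 0"
    and z: "z \<in> ball 0 1" "z \<noteq> 0"
  shows "C_quotient \<beta> f z * (z * deriv f z / f z + of_real \<beta> * (z / (1 - z)))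
           + z * deriv (C_quotient \<beta> f) z = 1"
proof -
  txt \<open>Off 0, q = F (1 - z)^\<beta> / f, whose logarithmic derivative is 1/(z q) - P/z.\<close>
  define E where "E = (\<lambda>w::complex. (1 - w) powr of_real \<beta>)"
  define E' where "E' = - of_real \<beta> * E z / (1 - z)"
  have hol: "f holomorphic_on ball 0 1" "f 0 = 0" using f by (auto simp: classA_def)
  have E_nz: "E w \<noteq> 0" if "w \<in> ball 0 1" for w using that by (auto simp: E_def)
  have integrand: "C_integrand \<beta> f w = f w / (w * E w)" if "w \<noteq> 0" for w
    using that by (simp add: C_integrand_def E_def)
  have quot: "C_op \<beta> f w * E w / f w = C_quotient \<beta> f w" if "w \<in> ball 0 1 - {0}" for w
    using that nz E_nz by (auto simp: C_quotient_def integrand)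
  have "((\<lambda>w. C_op \<beta> f w * E w / f w) has_field_derivative
          ((C_integrand \<beta> f z * E z + E' * C_op \<beta> f z) * f z - C_op \<beta> f z * E z * deriv f z)
            / (f z * f z)) (at z)"
    unfolding E_def E'_def
    using z hol nz holomorphic_derivI[OF hol(1)]
    by (intro DERIV_divide DERIV_mult C_op_has_field_derivative powr_one_minus_has_field_derivative) auto
  from has_field_derivative_transform_within_open[OF this _ _ quot, of "ball 0 1 - {0}"]
  have "deriv (C_quotient \<beta> f) z = ((C_integrand \<beta> f z * E z + E' * C_op \<beta> f z) * f z
                                     - C_op \<beta> f z * E z * deriv f z) / (f z * f z)"
    using z by (intro DERIV_imp_deriv) auto
  then show ?thesis
    using z nz[OF z] E_nz[OF z(1)]
    by (simp add: C_quotient_def integrand E'_def field_simps)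
qed

lemma starlike_classI:
  assumes "F \<in> classA"
    and "\<And>z. z \<in> ball 0 1 \<Longrightarrow> z \<noteq> 0 \<Longrightarrow> deriv F z \<noteq> 0"
    and "\<And>z. z \<in> ball 0 1 \<Longrightarrow> z \<noteq> 0 \<Longrightarrow> Re (F z / (z * deriv F z)) > 0"
  shows "F \<in> starlike_class"
proof -
  have "F z \<noteq> 0 \<and> Re (z * deriv F z / F z) > 0" if "z \<in> ball 0 1" "z \<noteq> 0" for z
  proof -
    have pos: "Re (F z / (z * deriv F z)) > 0" using assms(3)[OF that] .
    have Re_inverse_pos: "Re (inverse w) > 0" if "Re w > 0" for w :: complex
      using that by (simp add: add_pos_nonneg)
    have "z * deriv F z / F z = inverse (F z / (z * deriv F z))" by simp
    then show ?thesis
      using pos Re_inverse_pos[OF pos] by auto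
  qed
  then show ?thesis
    using assms(1) by (simp add: starlike_class_def starlike_order_def)
qed

theorem theorem2p10:
  fixes lam \<beta> :: real and f :: "complex \<Rightarrow> complex"
  assumes "0 \<le> lam" and "lam < 1"
    and "0 \<le> \<beta>" and "\<beta> \<le> 2 * lam"
    and "f \<in> starlike_order lam"
  shows "C_op \<beta> f \<in> starlike_class"
proof -
  have f: "f \<in> classA" and nz: "\<And>z. z \<in> ball 0 1 \<Longrightarrow> z \<noteq> 0 \<Longrightarrow> f z \<noteq> 0"
    and order: "\<And>z. z \<in> ball 0 1 \<Longrightarrow> z \<noteq> 0 \<Longrightarrow> Re (z * deriv f z / f z) > lam"
    using assms(5) by (auto simp: starlike_order_def)
  have Re_quotient: "Re (C_quotient \<beta> f z) > 0" if "z \<in> ball 0 1" for z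
  proof (rule Re_pos_if_differential_equation[OF C_quotient_holomorphic[OF f nz] _
          C_quotient_differential_equation[OF f nz] _ that])
    show "Re (C_quotient \<beta> f 0) > 0" by (simp add: C_quotient_def)
    show "Re (w * deriv f w / f w + of_real \<beta> * (w / (1 - w))) > 0"
      if "w \<in> ball 0 1" "w \<noteq> 0" for w
      using order[OF that] assms(3,4) that(1) by (intro Re_plus_of_real_mult_div_one_minus_pos) auto
  qed
  have deriv: "deriv (C_op \<beta> f) z = C_integrand \<beta> f z" if "z \<in> ball 0 1" for z
    using f that by (intro deriv_C_op) (auto simp: classA_def)
  show ?thesis
  proof (rule starlike_classI[OF C_op_classA[OF f]])
    fix z :: complex assume z: "z \<in> ball 0 1" "z \<noteq> 0"
    show "deriv (C_op \<beta> f) z \<noteq> 0"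
      using deriv[OF z(1)] C_integrand_nonzero[OF f nz z(1)] by simp
    show "Re (C_op \<beta> f z / (z * deriv (C_op \<beta> f) z)) > 0"
      using Re_quotient[OF z(1)] deriv[OF z(1)] z(2) by (simp add: C_quotient_def)
  qed
qed

end
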